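(* The Petersen graph has ID-index $3$.
   Context: For a finite simple connected graph $G=(V,E)$ with diameter $d$, a rank assignment is a function $f:V\to\mathbb{R}$; under $f$, the string of a vertex $v$ is the $d$-vector whose $i$-th coordinate is the sum of $f(w)$ over all vertices $w$ with $d(v,w)=i$. The ID-index $IDI(G)$ is the minimum $k$ such that there exists $f:V\to\mathbb{R}$ with $|f(V)|=k$ under which all vertices have distinct strings. *)

theory Defs
  imports Complex_Main
begin

definition simple_graph :: "'a set \<Rightarrow> ('a \<times> 'a) set \<Rightarrow> bool" where
  "simple_graph V E \<longleftrightarrow> finite V \<and> E \<subseteq> V \<times> V \<and> sym E \<and> irrefl E"

definition connected_graph :: "'a set \<Rightarrow> ('a \<times> 'a) set \<Rightarrow> bool" where
  "connected_graph V E \<longleftrightarrow> V \<noteq> {} \<and> (\<forall>u\<in>V. \<forall>v\<in>V. (u, v) \<in> E\<^sup>*)"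

definition gdist :: "('a \<times> 'a) set \<Rightarrow> 'a \<Rightarrow> 'a \<Rightarrow> nat" where
  "gdist E u v = (LEAST n. (u, v) \<in> E ^^ n)"

definition diameter :: "'a set \<Rightarrow> ('a \<times> 'a) set \<Rightarrow> nat" where
  "diameter V E = Max {gdist E u v | u v. u \<in> V \<and> v \<in> V}"

definition vstring :: "'a set \<Rightarrow> ('a \<times> 'a) set \<Rightarrow> ('a \<Rightarrow> real) \<Rightarrow> 'a \<Rightarrow> real list" where
  "vstring V E f v = map (\<lambda>i. \<Sum>w\<in>{w\<in>V. gdist E v w = i}. f w) [1..<diameter V E + 1]"

definition IDI :: "'a set \<Rightarrow> ('a \<times> 'a) set \<Rightarrow> nat" where
  "IDI V E = (LEAST k. \<exists>f :: 'a \<Rightarrow> real. card (f ` V) = k \<and> inj_on (vstring V E f) V)"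

text \<open>The Petersen graph, as the Kneser graph K(5,2): vertices are the 2-subsets of
a 5-set, adjacent iff disjoint.\<close>
definition petersen_V :: "nat set set" where
  "petersen_V = {A. A \<subseteq> {0..<5} \<and> card A = 2}"

definition petersen_E :: "(nat set \<times> nat set) set" where
  "petersen_E = {(A, B). A \<in> petersen_V \<and> B \<in> petersen_V \<and> A \<inter> B = {}}"

end

(* In a graph of diameter two every vertex v lies at distance 0, 1 or 2 from the others,
   so its string is (s v, T - f v - s v), where s v is the rank sum over the neighbours of v
   and T the total rank; the string is therefore determined by the pair (f v, s v).
   If f takes only two values, then in the 3-regular Petersen graph s v takes at most
   four values, giving at most 8 distinct strings for 10 vertices.  Three ranks suffice,
   as an explicit assignment shows. *)

theory Submission
  imports Defs
begin

lemma gdist_eqI: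
  assumes "(u, v) \<in> E ^^ n" and "\<And>m. m < n \<Longrightarrow> (u, v) \<notin> E ^^ m"
  shows "gdist E u v = n"
  unfolding gdist_def using assms by (intro Least_equality) (auto simp: not_less[symmetric])

lemma gdist_eq_0_iff:
  assumes "(u, v) \<in> E\<^sup>*"
  shows "gdist E u v = 0 \<longleftrightarrow> u = v"
proof
  obtain n where "(u, v) \<in> E ^^ n"
    using rtrancl_imp_relpow[OF assms] by blast
  then have "(u, v) \<in> E ^^ gdist E u v"
    unfolding gdist_def by (rule LeastI)
  then show "gdist E u v = 0 \<Longrightarrow> u = v" by simp
qed (auto intro: gdist_eqI)

lemma gdist_le_diameter:
  assumes "finite V" and "u \<in> V" and "v \<in> V"
  shows "gdist E u v \<le> diameter V E"
proof -
  have "{gdist E u v | u v. u \<in> V \<and> v \<in> V} = (\<lambda>(u, v). gdist E u v) ` (V \<times> V)"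
    by auto
  then show ?thesis
    unfolding diameter_def using assms by (intro Max_ge) auto
qed

lemma diameter_eqI:
  assumes "finite V" and "\<And>u v. u \<in> V \<Longrightarrow> v \<in> V \<Longrightarrow> gdist E u v \<le> d"
    and "u \<in> V" and "v \<in> V" and "gdist E u v = d"
  shows "diameter V E = d"
proof -
  have "{gdist E u v | u v. u \<in> V \<and> v \<in> V} = (\<lambda>(u, v). gdist E u v) ` (V \<times> V)"
    by auto
  then show ?thesis
    unfolding diameter_def using assms by (intro Max_eqI) auto
qed

lemma vstring_diameter_two:
  assumes "finite V" and "connected_graph V E" and "diameter V E = 2" and "v \<in> V"
  shows "vstring V E f v =
    [(\<Sum>w\<in>{w\<in>V. gdist E v w = 1}. f w), sum f V - f v - (\<Sum>w\<in>{w\<in>V. gdist E v w = 1}. f w)]"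
proof -
  have distances: "gdist E v ` V \<subseteq> {0, 1, 2}"
  proof (rule image_subsetI)
    fix w assume "w \<in> V"
    then show "gdist E v w \<in> {0, 1, 2}"
      using gdist_le_diameter[OF assms(1,4), of w E] assms(3) by auto
  qed
  have reachable: "(v, w) \<in> E\<^sup>*" if "w \<in> V" for w
    using assms(2,4) that unfolding connected_graph_def by blast
  have zero: "{w\<in>V. gdist E v w = 0} = {v}"
    using assms(4) gdist_eq_0_iff[OF reachable] by auto
  have "sum f V = (\<Sum>i\<in>{0, 1, 2}. \<Sum>w\<in>{w\<in>V. gdist E v w = i}. f w)"
    by (rule sum.group[OF assms(1) _ distances, symmetric]) simp
  also have "\<dots> =
      f v + (\<Sum>w\<in>{w\<in>V. gdist E v w = 1}. f w) + (\<Sum>w\<in>{w\<in>V. gdist E v w = 2}. f w)"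
    by (simp add: zero add.assoc)
  finally have "sum f V =
      f v + (\<Sum>w\<in>{w\<in>V. gdist E v w = 1}. f w) + (\<Sum>w\<in>{w\<in>V. gdist E v w = 2}. f w)" .
  moreover have "[1..<diameter V E + 1] = [1, 2]"
    unfolding assms(3) by (simp add: upt_rec)
  ultimately show ?thesis
    unfolding vstring_def by simp
qed

lemma inj_on_vstring_diameter_two:
  assumes "finite V" and "connected_graph V E" and "diameter V E = 2"
    and "inj_on (\<lambda>v. (f v, \<Sum>w\<in>{w\<in>V. gdist E v w = 1}. f w)) V"
  shows "inj_on (vstring V E f) V"
  using assms(4) by (auto simp: inj_on_def vstring_diameter_two[OF assms(1-3)])

lemma card_le_2_subset_doubleton:
  assumes "finite A" and "card A \<le> 2"
  obtains a b where "A \<subseteq> {a, b}"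
  using assms by (metis Suc_1 Suc_eq_plus1_left card_1_singletonE card_2_iff card_seteq
    empty_subsetI le_add1 nle_le not_less_eq_eq subset_insertI2 subset_refl)

lemma sum_two_valued:
  fixes f :: "'a \<Rightarrow> real"
  assumes "finite A" and "f ` A \<subseteq> {a, b}"
  shows "sum f A \<in> (\<lambda>m. a * real (card A - m) + b * real m) ` {0..card A}"
proof
  let ?B = "{x\<in>A. f x = b}"
  have "sum f A = sum f (A - ?B) + sum f ?B"
    using assms(1) by (intro sum.subset_diff) auto
  also have "sum f (A - ?B) = (\<Sum>x\<in>A - ?B. a)"
    using assms(2) by (intro sum.cong) auto
  also have "\<dots> = a * real (card (A - ?B))"
    by simp
  also have "sum f ?B = b * real (card ?B)"
    by simp
  also have "card (A - ?B) = card A - card ?B"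
    using assms(1) by (intro card_Diff_subset) auto
  finally show "sum f A = a * real (card A - card ?B) + b * real (card ?B)" .
  show "card ?B \<in> {0..card A}"
    using assms(1) by (auto intro: card_mono)
qed

lemma card_le_if_two_ranks_identify:
  assumes "finite V" and "connected_graph V E" and "diameter V E = 2"
    and regular: "\<And>v. v \<in> V \<Longrightarrow> card {w\<in>V. gdist E v w = 1} = k"
    and identify: "inj_on (vstring V E f) V" and two_ranks: "card (f ` V) \<le> 2"
  shows "card V \<le> 2 * (k + 1)"
proof -
  obtain a b where ab: "f ` V \<subseteq> {a, b}"
    using card_le_2_subset_doubleton[OF finite_imageI[OF assms(1)] two_ranks] .
  define S where "S = (\<lambda>m. a * real (k - m) + b * real m) ` {0..k}"
  define string_of where "string_of = (\<lambda>(x, y). [y, sum f V - x - y])"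
  have strings: "vstring V E f ` V \<subseteq> string_of ` ({a, b} \<times> S)"
  proof
    fix s assume "s \<in> vstring V E f ` V"
    then obtain v where v: "v \<in> V" and s: "s = vstring V E f v" by blast
    let ?y = "\<Sum>w\<in>{w\<in>V. gdist E v w = 1}. f w"
    have "?y \<in> S"
      using sum_two_valued[of "{w\<in>V. gdist E v w = 1}" f a b] assms(1) ab
      unfolding S_def regular[OF v] by auto
    moreover have "f v \<in> {a, b}" using ab v by blast
    ultimately have "(f v, ?y) \<in> {a, b} \<times> S" by blast
    moreover have "s = string_of (f v, ?y)"
      unfolding s string_of_def vstring_diameter_two[OF assms(1-3) v] by simp
    ultimately show "s \<in> string_of ` ({a, b} \<times> S)"
      by (rule rev_image_eqI)
  qed
  have "card V = card (vstring V E f ` V)"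
    by (simp add: card_image[OF identify])
  also have "\<dots> \<le> card (string_of ` ({a, b} \<times> S))"
    using strings by (rule card_mono[rotated]) (simp add: S_def)
  also have "\<dots> \<le> card ({a, b} \<times> S)"
    by (rule card_image_le) (simp add: S_def)
  also have "\<dots> = card {a, b} * card S"
    by (rule card_cartesian_product)
  also have "\<dots> \<le> 2 * (k + 1)"
    using card_image_le[of "{0..k}"] unfolding S_def
    by (intro mult_le_mono) (auto simp: card_insert_if)
  finally show ?thesis .
qed

lemma card_petersen_V: "card petersen_V = 10"
  unfolding petersen_V_def by (simp add: n_subsets numeral_eq_Suc)

lemma finite_petersen_V: "finite petersen_V"
  using card_petersen_V by (intro card_ge_0_finite) simp

lemma petersen_common_neighbour:
  assumes A: "A \<in> petersen_V" and B: "B \<in> petersen_V" and "A \<noteq> B" and "A \<inter> B \<noteq> {}"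
  obtains C where "C \<in> petersen_V" and "A \<inter> C = {}" and "B \<inter> C = {}"
proof
  have card: "card A = 2" "card B = 2" and sub: "A \<union> B \<subseteq> {0..<5}"
    using A B unfolding petersen_V_def by auto
  then have fin: "finite A" "finite B"
    by (auto intro: card_ge_0_finite)
  have "card (A \<inter> B) \<noteq> 2"
    using card_subset_eq[OF fin(1), of "A \<inter> B"] card_subset_eq[OF fin(2), of "A \<inter> B"] card \<open>A \<noteq> B\<close>
    by auto
  moreover have "card (A \<inter> B) \<le> 2" and "card (A \<inter> B) \<noteq> 0"
    using card card_mono[OF fin(1), of "A \<inter> B"] fin \<open>A \<inter> B \<noteq> {}\<close> by auto
  ultimately have "card (A \<union> B) = 3"
    using card_Un_Int[OF fin] card by simp
  then have "card ({0..<5} - (A \<union> B)) = 2"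
    using sub by (simp add: card_Diff_subset fin)
  then show "{0..<5} - (A \<union> B) \<in> petersen_V"
    unfolding petersen_V_def by auto
qed auto

lemma petersen_walk:
  assumes A: "A \<in> petersen_V" and B: "B \<in> petersen_V"
  shows "(A, B) \<in> petersen_E ^^ (if A = B then 0 else if A \<inter> B = {} then 1 else 2)"
proof -
  consider "A = B" | "A \<noteq> B" "A \<inter> B = {}" | "A \<noteq> B" "A \<inter> B \<noteq> {}"
    by blast
  then show ?thesis
  proof cases
    case 3
    obtain C where "C \<in> petersen_V" "A \<inter> C = {}" "B \<inter> C = {}"
      using petersen_common_neighbour[OF A B 3] .
    then have "(A, C) \<in> petersen_E" and "(C, B) \<in> petersen_E"
      using A B unfolding petersen_E_def by auto
    then show ?thesis
      using 3 by (auto simp: numeral_2_eq_2)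
  qed (use A B in \<open>auto simp: petersen_E_def\<close>)
qed

lemma petersen_gdist:
  assumes "A \<in> petersen_V" and "B \<in> petersen_V"
  shows "gdist petersen_E A B = (if A = B then 0 else if A \<inter> B = {} then 1 else 2)"
  using petersen_walk[OF assms]
  by (intro gdist_eqI) (auto simp: petersen_E_def less_Suc_eq numeral_2_eq_2 split: if_splits)

lemma connected_petersen: "connected_graph petersen_V petersen_E"
  unfolding connected_graph_def
  using card_petersen_V petersen_walk relpow_imp_rtrancl by fastforce

lemma diameter_petersen: "diameter petersen_V petersen_E = 2"
proof (rule diameter_eqI[OF finite_petersen_V])
  show "{0, 1} \<in> petersen_V" and "{0, 2} \<in> petersen_V"
    unfolding petersen_V_def by auto
  show "gdist petersen_E {0, 1} {0, 2} = 2"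
    using petersen_gdist[OF \<open>{0, 1} \<in> petersen_V\<close> \<open>{0, 2} \<in> petersen_V\<close>]
    by (simp add: doubleton_eq_iff)
qed (simp add: petersen_gdist)

lemma petersen_neighbours:
  assumes "v \<in> petersen_V"
  shows "{w\<in>petersen_V. gdist petersen_E v w = 1} = {w\<in>petersen_V. v \<inter> w = {}}"
  using assms petersen_gdist[OF assms] unfolding petersen_V_def by (auto split: if_splits)

lemma card_petersen_neighbours:
  assumes "v \<in> petersen_V"
  shows "card {w\<in>petersen_V. gdist petersen_E v w = 1} = 3"
proof -
  have "{w\<in>petersen_V. v \<inter> w = {}} = {w. w \<subseteq> {0..<5} - v \<and> card w = 2}"
    unfolding petersen_V_def by auto
  moreover have "card ({0..<5} - v) = 3"
    using assms unfolding petersen_V_def by (auto simp: card_Diff_subset finite_subset)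
  ultimately show ?thesis
    unfolding petersen_neighbours[OF assms] by (simp add: n_subsets numeral_eq_Suc)
qed

definition petersen_vertices :: "nat set list" where
  "petersen_vertices = [{0,1}, {0,2}, {0,3}, {0,4}, {1,2}, {1,3}, {1,4}, {2,3}, {2,4}, {3,4}]"

lemma distinct_petersen_vertices: "distinct petersen_vertices"
  unfolding petersen_vertices_def by (simp add: doubleton_eq_iff)

lemma set_petersen_vertices: "set petersen_vertices = petersen_V"
proof (rule card_subset_eq[OF finite_petersen_V])
  show "set petersen_vertices \<subseteq> petersen_V"
    unfolding petersen_vertices_def petersen_V_def by auto
  show "card (set petersen_vertices) = card petersen_V"
    using distinct_card[OF distinct_petersen_vertices] card_petersen_V
    by (simp add: petersen_vertices_def)
qed

definition petersen_rank :: "nat set \<Rightarrow> real" where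
  "petersen_rank A =
    (if A \<in> {{0,4}, {1,3}} then 1 else if A \<in> {{1,4}, {2,3}, {3,4}} then 2 else 0)"

lemma card_petersen_rank_image: "card (petersen_rank ` petersen_V) = 3"
  unfolding set_petersen_vertices[symmetric] image_set card_set
  by (simp add: petersen_vertices_def petersen_rank_def doubleton_eq_iff)

lemma petersen_rank_identifies:
  "inj_on (vstring petersen_V petersen_E petersen_rank) petersen_V"
proof (rule inj_on_vstring_diameter_two[OF finite_petersen_V connected_petersen diameter_petersen])
  let ?r = petersen_rank and ?L = petersen_vertices
  let ?s = "\<lambda>v. sum_list (map ?r (filter (\<lambda>w. v \<inter> w = {}) ?L))"
  have "distinct (map (\<lambda>v. (?r v, ?s v)) ?L)"
    by (simp add: petersen_vertices_def petersen_rank_def doubleton_eq_iff)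
  then have "inj_on (\<lambda>v. (?r v, ?s v)) petersen_V"
    by (simp add: distinct_map set_petersen_vertices)
  moreover have "(\<Sum>w\<in>{w\<in>petersen_V. gdist petersen_E v w = 1}. ?r w) = ?s v"
    if "v \<in> petersen_V" for v
  proof -
    have "{w\<in>petersen_V. gdist petersen_E v w = 1} = set (filter (\<lambda>w. v \<inter> w = {}) ?L)"
      unfolding petersen_neighbours[OF that] by (simp add: set_petersen_vertices)
    then show ?thesis
      by (simp only: sum.distinct_set_conv_list[OF distinct_filter[OF distinct_petersen_vertices]])
  qed
  ultimately show "inj_on (\<lambda>v. (?r v, \<Sum>w\<in>{w\<in>petersen_V. gdist petersen_E v w = 1}. ?r w)) petersen_V"
    by (simp cong: inj_on_cong)
qed

theorem mainTheorem10:
  shows "IDI petersen_V petersen_E = 3"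
  unfolding IDI_def
proof (rule Least_equality)
  show "\<exists>f :: nat set \<Rightarrow> real. card (f ` petersen_V) = 3 \<and>
      inj_on (vstring petersen_V petersen_E f) petersen_V"
    using card_petersen_rank_image petersen_rank_identifies by blast
next
  fix k
  assume "\<exists>f :: nat set \<Rightarrow> real. card (f ` petersen_V) = k \<and>
      inj_on (vstring petersen_V petersen_E f) petersen_V"
  then obtain f :: "nat set \<Rightarrow> real" where k: "card (f ` petersen_V) = k"
    and identifies: "inj_on (vstring petersen_V petersen_E f) petersen_V"
    by blast
  show "3 \<le> k"
  proof (rule ccontr)
    assume "\<not> 3 \<le> k"
    then have "card petersen_V \<le> 2 * (3 + 1)"
      using card_le_if_two_ranks_identify[OF finite_petersen_V connected_petersen
          diameter_petersen card_petersen_neighbours identifies] k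
      by simp
    then show False
      using card_petersen_V by simp
  qed
qed

end
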